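(* Let $k\ge 1$ and let $G=K_{n_1,n_2,\dots,n_p}$ be a complete $p$-partite graph with $\delta(G)\ge k$ and $n_1\le n_2\le\dots\le n_p$. Suppose the set \[ M=\{x\in\mathbb{Z}_{>0} : \text{there is an integer } \ell \text{ with } 2\le \ell\le p,\ (\ell-1)x=k,\ x\le\min\{k,n_1,\dots,n_\ell\}\} \] is nonempty. Then $\gamma_{\times k,t}(G)\le k+\min M$.
   Context: A set $S\subseteq V(G)$ is a $k$-tuple total dominating set ($k$TDS) of a graph $G$ with $\delta(G)\ge k$ if $|N_G(x)\cap S|\ge k$ for every $x\in V(G)$. The $k$-tuple total domination number $\gamma_{\times k,t}(G)$ is the minimum cardinality of a $k$TDS of $G$. $K_{n_1,\dots,n_p}$ denotes the complete $p$-partite graph with parts of sizes $n_1,\dots,n_p$. *)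

theory Defs
  imports Main
begin

definition open_nbhd :: "'a set \<Rightarrow> ('a \<Rightarrow> 'a \<Rightarrow> bool) \<Rightarrow> 'a \<Rightarrow> 'a set" where
  "open_nbhd V E x = {y \<in> V. E x y}"

definition min_degree_ge :: "'a set \<Rightarrow> ('a \<Rightarrow> 'a \<Rightarrow> bool) \<Rightarrow> nat \<Rightarrow> bool" where
  "min_degree_ge V E k \<longleftrightarrow> (\<forall>x\<in>V. k \<le> card (open_nbhd V E x))"

definition is_kTDS :: "'a set \<Rightarrow> ('a \<Rightarrow> 'a \<Rightarrow> bool) \<Rightarrow> nat \<Rightarrow> 'a set \<Rightarrow> bool" where
  "is_kTDS V E k S \<longleftrightarrow> S \<subseteq> V \<and> (\<forall>x\<in>V. k \<le> card (open_nbhd V E x \<inter> S))"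

definition ktuple_tdom_number :: "'a set \<Rightarrow> ('a \<Rightarrow> 'a \<Rightarrow> bool) \<Rightarrow> nat \<Rightarrow> nat" where
  "ktuple_tdom_number V E k = (LEAST m. \<exists>S. is_kTDS V E k S \<and> card S = m)"

text \<open>Complete p-partite graph K_{n_1,...,n_p}: vertex (i,j) is the j-th vertex
(j < n i) of part i (1 \<le> i \<le> p); two vertices are adjacent iff they lie in
different parts.\<close>

definition cmp_vertices :: "(nat \<Rightarrow> nat) \<Rightarrow> nat \<Rightarrow> (nat \<times> nat) set" where
  "cmp_vertices n p = {(i, j). 1 \<le> i \<and> i \<le> p \<and> j < n i}"

definition cmp_adj :: "nat \<times> nat \<Rightarrow> nat \<times> nat \<Rightarrow> bool" where
  "cmp_adj x y \<longleftrightarrow> fst x \<noteq> fst y"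

end

theory Submission
  imports Defs
begin

text \<open>Choose x vertices from each of the first l parts, where (l - 1) x = k. A vertex
lies in at most one of these parts, so it is adjacent to at least (l - 1) x = k chosen
vertices; the chosen set has l x = k + x elements.\<close>

lemma ktuple_tdom_number_le_card:
  assumes "is_kTDS V E k S"
  shows "ktuple_tdom_number V E k \<le> card S"
  unfolding ktuple_tdom_number_def using assms by (intro Least_le) blast

lemma cmp_open_nbhd_inter_block:
  assumes "(a, b) \<in> cmp_vertices n p" and "{1..l} \<times> {0..<x} \<subseteq> cmp_vertices n p"
  shows "open_nbhd (cmp_vertices n p) cmp_adj (a, b) \<inter> {1..l} \<times> {0..<x}
           = ({1..l} - {a}) \<times> {0..<x}"
  using assms unfolding open_nbhd_def cmp_adj_def by auto

lemma cmp_block_is_kTDS: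
  assumes "l \<le> p" and "\<forall>i\<in>{1..l}. x \<le> n i" and "k \<le> (l - 1) * x"
  shows "is_kTDS (cmp_vertices n p) cmp_adj k ({1..l} \<times> {0..<x})"
  unfolding is_kTDS_def
proof (intro conjI ballI)
  show block: "{1..l} \<times> {0..<x} \<subseteq> cmp_vertices n p"
    using assms(1,2) unfolding cmp_vertices_def by force
  fix v assume v: "v \<in> cmp_vertices n p"
  obtain a b where ab: "v = (a, b)" by (cases v)
  have "l - 1 \<le> card ({1..l} - {a})"
    using diff_card_le_card_Diff[of "{a}" "{1..l}"] by simp
  then have "k \<le> card ({1..l} - {a}) * x"
    using assms(3) mult_le_mono1 order_trans by blast
  then show "k \<le> card (open_nbhd (cmp_vertices n p) cmp_adj v \<inter> {1..l} \<times> {0..<x})"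
    using cmp_open_nbhd_inter_block[OF v[unfolded ab] block] ab
    by (simp add: card_cartesian_product)
qed

theorem mainTheorem5:
  fixes n :: "nat \<Rightarrow> nat" and p k :: nat
  assumes "1 \<le> k"
    and "\<forall>i\<in>{1..p}. 1 \<le> n i"
    and "min_degree_ge (cmp_vertices n p) cmp_adj k"
    and "\<forall>i j. 1 \<le> i \<and> i \<le> j \<and> j \<le> p \<longrightarrow> n i \<le> n j"
    and "M = {x::nat. 0 < x \<and> (\<exists>l. 2 \<le> l \<and> l \<le> p \<and> (l - 1) * x = k
                   \<and> x \<le> k \<and> (\<forall>i\<in>{1..l}. x \<le> n i))}"
    and "M \<noteq> {}"
  shows "ktuple_tdom_number (cmp_vertices n p) cmp_adj k \<le> k + Min M"
proof -
  have "finite M" using assms(5) by (auto intro: finite_subset[of _ "{..k}"])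
  then have "Min M \<in> M" using assms(6) by simp
  then obtain l where l: "2 \<le> l" "l \<le> p" "(l - 1) * Min M = k" "\<forall>i\<in>{1..l}. Min M \<le> n i"
    using assms(5) by auto
  have "l * Min M = k + Min M"
    using l(1,3) by (cases l) auto
  moreover have "is_kTDS (cmp_vertices n p) cmp_adj k ({1..l} \<times> {0..<Min M})"
    using l by (intro cmp_block_is_kTDS) auto
  ultimately show ?thesis
    using ktuple_tdom_number_le_card by (fastforce simp: card_cartesian_product)
qed

end
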